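(* If for some $t'>0$ the set $I(t')$ is a single point, i.e. $l(t')=r(t')$, then for all $t>t'$ the set $I(t)$ has empty interior, i.e. $l(t)=r(t)$ whenever $I(t)\ne\emptyset$.
   Context: Standing assumptions: $u_0,u_b:[0,\infty)\to\mathbb{R}$ bounded measurable with $u_b>0$; $\rho_0,\rho_b:[0,\infty)\to(0,\infty)$ positive locally bounded measurable. For $x,t,y,\tau\ge0$: $F(y,x,t)=\int_0^y[tu_0(\eta)+\eta-x]\rho_0(\eta)\,d\eta$, $G(\tau,x,t)=\int_0^\tau[x-u_b(\eta)(t-\eta)]\rho_b(\eta)u_b(\eta)\,d\eta$, $F(x,t)=\min_{y\ge0}F(y,x,t)$, $G(x,t)=\min_{\tau\ge0}G(\tau,x,t)$. For fixed $t$, $F(\cdot,t)$ is decreasing and $G(\cdot,t)$ increasing in $x$, so $I(t)=\{x\ge0:F(x,t)=G(x,t)\}$ is a closed (possibly empty) interval, written $[l(t),r(t)]$ when nonempty. *)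

theory Defs
  imports "HOL-Analysis.Analysis"
begin

definition Fyxt :: "(real \<Rightarrow> real) \<Rightarrow> (real \<Rightarrow> real) \<Rightarrow> real \<Rightarrow> real \<Rightarrow> real \<Rightarrow> real" where
  "Fyxt u0 rho0 y x t = (LINT \<eta>:{0..y}|lborel. (t * u0 \<eta> + \<eta> - x) * rho0 \<eta>)"

definition Gtxt :: "(real \<Rightarrow> real) \<Rightarrow> (real \<Rightarrow> real) \<Rightarrow> real \<Rightarrow> real \<Rightarrow> real \<Rightarrow> real" where
  "Gtxt ub rhob \<tau> x t = (LINT \<eta>:{0..\<tau>}|lborel. (x - ub \<eta> * (t - \<eta>)) * rhob \<eta> * ub \<eta>)"

text \<open>F(x,t) = min over y >= 0 (the minimum is attained; written as an infimum)\<close>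
definition Fmin :: "(real \<Rightarrow> real) \<Rightarrow> (real \<Rightarrow> real) \<Rightarrow> real \<Rightarrow> real \<Rightarrow> real" where
  "Fmin u0 rho0 x t = (INF y\<in>{0..}. Fyxt u0 rho0 y x t)"

definition Gmin :: "(real \<Rightarrow> real) \<Rightarrow> (real \<Rightarrow> real) \<Rightarrow> real \<Rightarrow> real \<Rightarrow> real" where
  "Gmin ub rhob x t = (INF \<tau>\<in>{0..}. Gtxt ub rhob \<tau> x t)"

definition Iset :: "(real \<Rightarrow> real) \<Rightarrow> (real \<Rightarrow> real) \<Rightarrow> (real \<Rightarrow> real) \<Rightarrow> (real \<Rightarrow> real) \<Rightarrow> real \<Rightarrow> real set" where
  "Iset u0 rho0 ub rhob t = {x. 0 \<le> x \<and> Fmin u0 rho0 x t = Gmin ub rhob x t}"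

end

theory Submission
  imports Defs
begin

(* If x < x' both lie in I(t), monotonicity forces F(-,t) and G(-,t) to take one common value c at x
   and at x'. Now F(y,x,t) = F(y,x',t) + (x'-x) m(y) >= c + (x'-x) m(y), with m(y) the integral of rho0
   over [0,y], while boundedness of u0 gives F(y,x,t) >= -K m(y); the two bounds force c >= 0, and
   c <= 0 since y = 0 gives the value 0. The same works for G, so F(-,x',t) >= 0 and G(-,x,t) >= 0.
   For 0 <= s <= 1 we have s F(y,x,t) <= F(y,sx,st), because only the nonnegative term eta rho0
   escapes the scaling, and likewise for G; hence F(z,st) = G(z,st) = 0 for all z in [sx,sx'].
   With s = t'/t this puts a nondegenerate interval into I(t'). *)

lemma bounded_mult_comp:
  fixes f g :: "'a \<Rightarrow> 'b::real_normed_algebra"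
  assumes "bounded (f ` S)" "bounded (g ` S)"
  shows "bounded ((\<lambda>x. f x * g x) ` S)"
proof -
  obtain B C where "\<forall>x\<in>S. norm (f x) \<le> B" "\<forall>x\<in>S. norm (g x) \<le> C"
    using assms by (fastforce simp: bounded_iff)
  then have "norm (f x * g x) \<le> B * C" if "x \<in> S" for x
    using that by (meson norm_ge_zero norm_mult_ineq order_trans mult_mono)
  then show ?thesis
    by (auto simp: bounded_iff)
qed

lemma set_integrable_Icc_if_bounded:
  fixes f :: "real \<Rightarrow> real"
  assumes "f \<in> borel_measurable (restrict_space lborel {a..b})" "bounded (f ` {a..b})"
  shows "set_integrable lborel {a..b} f"
proof -
  obtain B where B: "\<forall>x\<in>{a..b}. norm (f x) \<le> B"
    using assms(2) by (fastforce simp: bounded_iff)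
  show ?thesis
    unfolding set_integrable_def
  proof (rule integrableI_bounded_set[where A="{a..b}" and B=B])
    show "(\<lambda>x. indicator {a..b} x *\<^sub>R f x) \<in> borel_measurable lborel"
      using assms(1) by (subst (asm) borel_measurable_restrict_space_iff) auto
  qed (use B in \<open>auto simp: emeasure_lborel_Icc_eq split: split_indicator\<close>)
qed

lemma bdd_below_set_integral_Icc_if_eventually_nonneg:
  fixes f :: "real \<Rightarrow> real"
  assumes integrable: "\<And>T. set_integrable lborel {0..T} f" and nonneg: "\<And>\<eta>. a \<le> \<eta> \<Longrightarrow> 0 \<le> f \<eta>"
  shows "bdd_below ((\<lambda>y. LINT \<eta>:{0..y}|lborel. f \<eta>) ` {0..})"
proof (rule bdd_belowI2)
  \<comment> \<open>\<open>min 0 f\<close> vanishes beyond \<open>a\<close>, so its integral over \<open>[0, y]\<close> is least for \<open>y = a\<close>.\<close>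
  define g where "g \<eta> = min 0 (f \<eta>)" for \<eta>
  have g_integrable: "set_integrable lborel {0..T} g" for T
  proof -
    have "(\<lambda>\<eta>. indicator {0..T} \<eta> *\<^sub>R g \<eta>) = (\<lambda>\<eta>. min 0 (indicator {0..T} \<eta> *\<^sub>R f \<eta>))"
      by (auto simp: g_def split: split_indicator)
    then show ?thesis
      using integrable[of T] by (simp add: set_integrable_def)
  qed
  fix y :: real
  have "(LINT \<eta>:{0..a}|lborel. g \<eta>) \<le> (LINT \<eta>:{0..y}|lborel. g \<eta>)"
    using g_integrable unfolding set_lebesgue_integral_def set_integrable_def
    by (intro integral_mono) (auto simp: g_def nonneg split: split_indicator)
  also have "\<dots> \<le> (LINT \<eta>:{0..y}|lborel. f \<eta>)"
    by (intro set_integral_mono g_integrable integrable) (simp add: g_def)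
  finally show "(LINT \<eta>:{0..a}|lborel. g \<eta>) \<le> (LINT \<eta>:{0..y}|lborel. f \<eta>)" .
qed

lemma set_integral_lborel_singleton: "(LINT \<eta>:{a}|lborel. f \<eta>) = (0::real)"
proof -
  have "AE \<eta> in lborel. indicator {a} \<eta> *\<^sub>R f \<eta> = 0"
    using AE_lborel_singleton[of a] by eventually_elim simp
  then show ?thesis
    unfolding set_lebesgue_integral_def by (rule integral_eq_zero_AE)
qed

text \<open>Weighting the two lower bounds by \<open>K\<close> and \<open>d\<close> eliminates \<open>m\<close>: \<open>H \<ge> K c / (d + K)\<close>.\<close>

lemma nonneg_if_INF_le_shift:
  fixes H m :: "'a \<Rightarrow> real"
  assumes "A \<noteq> {}" "0 < d" "0 \<le> K"
    and above_shift: "\<And>y. y \<in> A \<Longrightarrow> c + d * m y \<le> H y"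
    and above_neg: "\<And>y. y \<in> A \<Longrightarrow> - K * m y \<le> H y"
    and INF_le: "(INF y\<in>A. H y) \<le> c"
  shows "0 \<le> c"
proof -
  have "K * c / (d + K) \<le> H y" if "y \<in> A" for y
  proof -
    have "K * (c + d * m y) \<le> K * H y"
      using above_shift[OF that] \<open>0 \<le> K\<close> by (rule mult_left_mono)
    moreover have "d * (- K * m y) \<le> d * H y"
      using mult_left_mono[OF above_neg[OF that], of d] \<open>0 < d\<close> by simp
    ultimately have "K * c \<le> (d + K) * H y"
      by (simp add: algebra_simps)
    then show ?thesis
      using assms(2,3) by (simp add: divide_le_eq mult.commute)
  qed
  then have "K * c / (d + K) \<le> (INF y\<in>A. H y)"
    using \<open>A \<noteq> {}\<close> by (intro cINF_greatest)
  also note INF_le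
  finally have "K * c / (d + K) \<le> c" .
  then have "0 \<le> d * c"
    using assms(2,3) by (simp add: divide_le_eq algebra_simps)
  then show ?thesis
    using \<open>0 < d\<close> by (simp add: zero_le_mult_iff)
qed

locale initial_data =
  fixes u0 rho0 :: "real \<Rightarrow> real"
  assumes u0_measurable: "set_borel_measurable lborel {0..} u0"
    and u0_bounded: "\<exists>B. \<forall>\<eta>\<ge>0. \<bar>u0 \<eta>\<bar> \<le> B"
    and rho0_measurable: "set_borel_measurable lborel {0..} rho0"
    and rho0_pos: "\<forall>\<eta>\<ge>0. rho0 \<eta> > 0"
    and rho0_locally_bounded: "\<forall>T. \<exists>B. \<forall>\<eta>\<in>{0..T}. \<bar>rho0 \<eta>\<bar> \<le> B"
begin

lemma measurable_u0_Icc: "u0 \<in> borel_measurable (restrict_space lborel {0..T})"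
  using u0_measurable unfolding set_borel_measurable_def
  by (subst (asm) borel_measurable_restrict_space_iff[symmetric])
    (auto intro: measurable_restrict_mono)

lemma measurable_rho0_Icc: "rho0 \<in> borel_measurable (restrict_space lborel {0..T})"
  using rho0_measurable unfolding set_borel_measurable_def
  by (subst (asm) borel_measurable_restrict_space_iff[symmetric])
    (auto intro: measurable_restrict_mono)

lemma bounded_u0_Icc: "bounded (u0 ` {0..T})"
  using u0_bounded by (force simp: bounded_real)

lemma bounded_rho0_Icc: "bounded (rho0 ` {0..T})"
  using rho0_locally_bounded by (force simp: bounded_real)

lemma set_integrable_rho0: "set_integrable lborel {0..T} rho0"
  by (intro set_integrable_Icc_if_bounded bounded_rho0_Icc measurable_rho0_Icc)

lemma set_integrable_Fyxt_integrand:
  "set_integrable lborel {0..T} (\<lambda>\<eta>. (t * u0 \<eta> + \<eta> - x) * rho0 \<eta>)"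
proof (rule set_integrable_Icc_if_bounded)
  show "bounded ((\<lambda>\<eta>. (t * u0 \<eta> + \<eta> - x) * rho0 \<eta>) ` {0..T})"
    by (intro bounded_mult_comp bounded_plus_comp bounded_minus_comp bounded_u0_Icc bounded_rho0_Icc)
      (auto simp: image_constant_conv)
  show "(\<lambda>\<eta>. (t * u0 \<eta> + \<eta> - x) * rho0 \<eta>) \<in> borel_measurable (restrict_space lborel {0..T})"
    by (intro borel_measurable_times borel_measurable_add borel_measurable_diff
        measurable_u0_Icc measurable_rho0_Icc measurable_const measurable_restrict_space1
        measurable_ident_sets) auto
qed

lemma Fyxt_antimono: "x \<le> x' \<Longrightarrow> Fyxt u0 rho0 y x' t \<le> Fyxt u0 rho0 y x t"
  unfolding Fyxt_def
  by (rule set_integral_mono[OF set_integrable_Fyxt_integrand set_integrable_Fyxt_integrand])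
    (use rho0_pos in \<open>auto intro: mult_right_mono\<close>)

lemma bdd_below_Fyxt: "bdd_below ((\<lambda>y. Fyxt u0 rho0 y x t) ` {0..})"
proof -
  obtain B where B: "\<forall>\<eta>\<ge>0. \<bar>u0 \<eta>\<bar> \<le> B"
    using u0_bounded by blast
  show ?thesis
    unfolding Fyxt_def
  proof (rule bdd_below_set_integral_Icc_if_eventually_nonneg[OF set_integrable_Fyxt_integrand])
    fix \<eta> assume \<eta>: "max 0 (x + \<bar>t\<bar> * B) \<le> \<eta>"
    have "\<bar>t * u0 \<eta>\<bar> \<le> \<bar>t\<bar> * B"
      using B \<eta> by (simp add: abs_mult mult_left_mono)
    then have "0 \<le> t * u0 \<eta> + \<eta> - x"
      using \<eta> by linarith
    then show "0 \<le> (t * u0 \<eta> + \<eta> - x) * rho0 \<eta>"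
      using rho0_pos \<eta> by (intro mult_nonneg_nonneg) auto
  qed
qed

lemma Fmin_le_Fyxt: "0 \<le> y \<Longrightarrow> Fmin u0 rho0 x t \<le> Fyxt u0 rho0 y x t"
  unfolding Fmin_def by (rule cINF_lower[OF bdd_below_Fyxt]) simp

lemma Fmin_le_0: "Fmin u0 rho0 x t \<le> 0"
  using Fmin_le_Fyxt[of 0] by (simp add: Fyxt_def set_integral_lborel_singleton)

lemma Fmin_antimono: "x \<le> x' \<Longrightarrow> Fmin u0 rho0 x' t \<le> Fmin u0 rho0 x t"
  unfolding Fmin_def by (rule cINF_mono) (auto intro: bdd_below_Fyxt Fyxt_antimono)

lemma Fmin_eq_0_iff: "Fmin u0 rho0 x t = 0 \<longleftrightarrow> (\<forall>y\<ge>0. 0 \<le> Fyxt u0 rho0 y x t)"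
proof
  assume "\<forall>y\<ge>0. 0 \<le> Fyxt u0 rho0 y x t"
  then have "0 \<le> Fmin u0 rho0 x t"
    unfolding Fmin_def by (intro cINF_greatest) auto
  then show "Fmin u0 rho0 x t = 0"
    using Fmin_le_0 by (rule antisym[rotated])
qed (use Fmin_le_Fyxt in metis)

lemma Fyxt_shift_x:
  "Fyxt u0 rho0 y x t = Fyxt u0 rho0 y x' t + (x' - x) * (LINT \<eta>:{0..y}|lborel. rho0 \<eta>)"
proof -
  have "(\<lambda>\<eta>. (t * u0 \<eta> + \<eta> - x) * rho0 \<eta>)
      = (\<lambda>\<eta>. (t * u0 \<eta> + \<eta> - x') * rho0 \<eta> + (x' - x) * rho0 \<eta>)"
    by (simp add: fun_eq_iff algebra_simps)
  then show ?thesis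
    unfolding Fyxt_def
    by (simp add: set_integral_add(2) set_integrable_Fyxt_integrand set_integrable_rho0)
qed

lemma Fyxt_lower_bound: "\<exists>K\<ge>0. \<forall>y. - K * (LINT \<eta>:{0..y}|lborel. rho0 \<eta>) \<le> Fyxt u0 rho0 y x t"
proof -
  obtain B where B: "\<forall>\<eta>\<ge>0. \<bar>u0 \<eta>\<bar> \<le> B"
    using u0_bounded by blast
  define K where "K = \<bar>t\<bar> * B + \<bar>x\<bar>"
  have "- K * (LINT \<eta>:{0..y}|lborel. rho0 \<eta>) \<le> Fyxt u0 rho0 y x t" for y
    unfolding Fyxt_def set_integral_mult_right[symmetric]
  proof (rule set_integral_mono[OF _ set_integrable_Fyxt_integrand])
    show "set_integrable lborel {0..y} (\<lambda>\<eta>. - K * rho0 \<eta>)"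
      by (intro set_integrable_mult_right set_integrable_rho0)
    fix \<eta> assume \<eta>: "\<eta> \<in> {0..y}"
    have "\<bar>t * u0 \<eta>\<bar> \<le> \<bar>t\<bar> * B"
      using B \<eta> by (simp add: abs_mult mult_left_mono)
    then have "- K \<le> t * u0 \<eta> + \<eta> - x"
      using \<eta> abs_ge_minus_self[of "t * u0 \<eta>"] abs_ge_self[of x] unfolding K_def by simp
    then show "- K * rho0 \<eta> \<le> (t * u0 \<eta> + \<eta> - x) * rho0 \<eta>"
      using rho0_pos \<eta> by (intro mult_right_mono) auto
  qed
  moreover have "0 \<le> K"
    using B unfolding K_def by (meson abs_ge_zero add_nonneg_nonneg mult_nonneg_nonneg order_trans order_refl)
  ultimately show ?thesis
    by blast
qed

lemma Fmin_eq_0_if_flat: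
  assumes "x < x'" and flat: "Fmin u0 rho0 x t = Fmin u0 rho0 x' t"
  shows "Fmin u0 rho0 x' t = 0"
proof -
  obtain K where "0 \<le> K" and K: "\<forall>y. - K * (LINT \<eta>:{0..y}|lborel. rho0 \<eta>) \<le> Fyxt u0 rho0 y x t"
    using Fyxt_lower_bound by blast
  have "0 \<le> Fmin u0 rho0 x' t"
  proof (rule nonneg_if_INF_le_shift[where A="{0..}" and H="\<lambda>y. Fyxt u0 rho0 y x t"])
    show "0 < x' - x"
      using \<open>x < x'\<close> by simp
    show "Fmin u0 rho0 x' t + (x' - x) * (LINT \<eta>:{0..y}|lborel. rho0 \<eta>) \<le> Fyxt u0 rho0 y x t"
      if "y \<in> {0..}" for y
      using Fmin_le_Fyxt[of y x'] that by (simp add: Fyxt_shift_x[of y x t x'])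
    show "(INF y\<in>{0..}. Fyxt u0 rho0 y x t) \<le> Fmin u0 rho0 x' t"
      using flat by (simp add: Fmin_def)
  qed (use \<open>0 \<le> K\<close> K in auto)
  then show ?thesis
    using Fmin_le_0 by (rule antisym[rotated])
qed

lemma Fyxt_scale: "0 \<le> s \<Longrightarrow> s \<le> 1 \<Longrightarrow> s * Fyxt u0 rho0 y x t \<le> Fyxt u0 rho0 y (s * x) (s * t)"
  unfolding Fyxt_def set_integral_mult_right[symmetric]
proof (rule set_integral_mono[OF set_integrable_mult_right[OF set_integrable_Fyxt_integrand]
      set_integrable_Fyxt_integrand])
  fix \<eta> assume "0 \<le> s" "s \<le> 1" "\<eta> \<in> {0..y}"
  then have "0 \<le> (1 - s) * \<eta> * rho0 \<eta>"
    using rho0_pos by (intro mult_nonneg_nonneg) auto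
  then show "s * ((t * u0 \<eta> + \<eta> - x) * rho0 \<eta>) \<le> (s * t * u0 \<eta> + \<eta> - s * x) * rho0 \<eta>"
    by (simp add: algebra_simps)
qed

end

locale boundary_data =
  fixes ub rhob :: "real \<Rightarrow> real"
  assumes ub_measurable: "set_borel_measurable lborel {0..} ub"
    and ub_bounded: "\<exists>B. \<forall>\<eta>\<ge>0. \<bar>ub \<eta>\<bar> \<le> B"
    and ub_pos: "\<forall>\<eta>\<ge>0. ub \<eta> > 0"
    and rhob_measurable: "set_borel_measurable lborel {0..} rhob"
    and rhob_pos: "\<forall>\<eta>\<ge>0. rhob \<eta> > 0"
    and rhob_locally_bounded: "\<forall>T. \<exists>B. \<forall>\<eta>\<in>{0..T}. \<bar>rhob \<eta>\<bar> \<le> B"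
begin

lemma measurable_ub_Icc: "ub \<in> borel_measurable (restrict_space lborel {0..T})"
  using ub_measurable unfolding set_borel_measurable_def
  by (subst (asm) borel_measurable_restrict_space_iff[symmetric])
    (auto intro: measurable_restrict_mono)

lemma measurable_rhob_Icc: "rhob \<in> borel_measurable (restrict_space lborel {0..T})"
  using rhob_measurable unfolding set_borel_measurable_def
  by (subst (asm) borel_measurable_restrict_space_iff[symmetric])
    (auto intro: measurable_restrict_mono)

lemma bounded_ub_Icc: "bounded (ub ` {0..T})"
  using ub_bounded by (force simp: bounded_real)

lemma bounded_rhob_Icc: "bounded (rhob ` {0..T})"
  using rhob_locally_bounded by (force simp: bounded_real)

lemma set_integrable_rhob_ub: "set_integrable lborel {0..T} (\<lambda>\<eta>. rhob \<eta> * ub \<eta>)"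
  by (intro set_integrable_Icc_if_bounded bounded_mult_comp bounded_rhob_Icc bounded_ub_Icc
      borel_measurable_times measurable_rhob_Icc measurable_ub_Icc)

lemma set_integrable_Gtxt_integrand:
  "set_integrable lborel {0..T} (\<lambda>\<eta>. (x - ub \<eta> * (t - \<eta>)) * rhob \<eta> * ub \<eta>)"
proof (rule set_integrable_Icc_if_bounded)
  show "bounded ((\<lambda>\<eta>. (x - ub \<eta> * (t - \<eta>)) * rhob \<eta> * ub \<eta>) ` {0..T})"
    by (intro bounded_mult_comp bounded_minus_comp bounded_ub_Icc bounded_rhob_Icc)
      (auto simp: image_constant_conv)
  show "(\<lambda>\<eta>. (x - ub \<eta> * (t - \<eta>)) * rhob \<eta> * ub \<eta>) \<in> borel_measurable (restrict_space lborel {0..T})"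
    by (intro borel_measurable_times borel_measurable_diff
        measurable_ub_Icc measurable_rhob_Icc measurable_const measurable_restrict_space1
        measurable_ident_sets) auto
qed

lemma Gtxt_mono: "x \<le> x' \<Longrightarrow> Gtxt ub rhob \<tau> x t \<le> Gtxt ub rhob \<tau> x' t"
  unfolding Gtxt_def
  by (rule set_integral_mono[OF set_integrable_Gtxt_integrand set_integrable_Gtxt_integrand])
    (use rhob_pos ub_pos in \<open>auto intro!: mult_right_mono\<close>)

lemma bdd_below_Gtxt: "0 \<le> x \<Longrightarrow> bdd_below ((\<lambda>\<tau>. Gtxt ub rhob \<tau> x t) ` {0..})"
  unfolding Gtxt_def
proof (rule bdd_below_set_integral_Icc_if_eventually_nonneg[OF set_integrable_Gtxt_integrand])
  fix \<eta> assume "0 \<le> x" and \<eta>: "max 0 t \<le> \<eta>"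
  then have "ub \<eta> * (t - \<eta>) \<le> 0"
    using ub_pos by (intro mult_nonneg_nonpos) auto
  then show "0 \<le> (x - ub \<eta> * (t - \<eta>)) * rhob \<eta> * ub \<eta>"
    using \<open>0 \<le> x\<close> \<eta> ub_pos rhob_pos by (intro mult_nonneg_nonneg) auto
qed

lemma Gmin_le_Gtxt: "0 \<le> x \<Longrightarrow> 0 \<le> \<tau> \<Longrightarrow> Gmin ub rhob x t \<le> Gtxt ub rhob \<tau> x t"
  unfolding Gmin_def by (rule cINF_lower[OF bdd_below_Gtxt]) simp_all

lemma Gmin_le_0: "0 \<le> x \<Longrightarrow> Gmin ub rhob x t \<le> 0"
  using Gmin_le_Gtxt[of x 0] by (simp add: Gtxt_def set_integral_lborel_singleton)

lemma Gmin_mono: "0 \<le> x \<Longrightarrow> x \<le> x' \<Longrightarrow> Gmin ub rhob x t \<le> Gmin ub rhob x' t"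
  unfolding Gmin_def by (rule cINF_mono) (auto intro: bdd_below_Gtxt Gtxt_mono)

lemma Gmin_eq_0_iff: "0 \<le> x \<Longrightarrow> Gmin ub rhob x t = 0 \<longleftrightarrow> (\<forall>\<tau>\<ge>0. 0 \<le> Gtxt ub rhob \<tau> x t)"
proof
  assume "0 \<le> x" "\<forall>\<tau>\<ge>0. 0 \<le> Gtxt ub rhob \<tau> x t"
  then have "0 \<le> Gmin ub rhob x t"
    unfolding Gmin_def by (intro cINF_greatest) auto
  then show "Gmin ub rhob x t = 0"
    using Gmin_le_0[OF \<open>0 \<le> x\<close>] by (rule antisym[rotated])
qed (use Gmin_le_Gtxt in metis)

lemma Gtxt_shift_x:
  "Gtxt ub rhob \<tau> x' t = Gtxt ub rhob \<tau> x t + (x' - x) * (LINT \<eta>:{0..\<tau>}|lborel. rhob \<eta> * ub \<eta>)"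
proof -
  have "(\<lambda>\<eta>. (x' - ub \<eta> * (t - \<eta>)) * rhob \<eta> * ub \<eta>)
      = (\<lambda>\<eta>. (x - ub \<eta> * (t - \<eta>)) * rhob \<eta> * ub \<eta> + (x' - x) * (rhob \<eta> * ub \<eta>))"
    by (simp add: fun_eq_iff algebra_simps)
  then show ?thesis
    unfolding Gtxt_def
    by (simp add: set_integral_add(2) set_integrable_Gtxt_integrand set_integrable_rhob_ub)
qed

lemma Gtxt_lower_bound:
  assumes "0 \<le> x"
  shows "\<exists>K\<ge>0. \<forall>\<tau>. - K * (LINT \<eta>:{0..\<tau>}|lborel. rhob \<eta> * ub \<eta>) \<le> Gtxt ub rhob \<tau> x t"
proof -
  obtain B where B: "\<forall>\<eta>\<ge>0. \<bar>ub \<eta>\<bar> \<le> B"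
    using ub_bounded by blast
  define K where "K = B * \<bar>t\<bar>"
  have "- K * (LINT \<eta>:{0..\<tau>}|lborel. rhob \<eta> * ub \<eta>) \<le> Gtxt ub rhob \<tau> x t" for \<tau>
    unfolding Gtxt_def set_integral_mult_right[symmetric]
  proof (rule set_integral_mono[OF _ set_integrable_Gtxt_integrand])
    show "set_integrable lborel {0..\<tau>} (\<lambda>\<eta>. - K * (rhob \<eta> * ub \<eta>))"
      by (intro set_integrable_mult_right set_integrable_rhob_ub)
    fix \<eta> assume \<eta>: "\<eta> \<in> {0..\<tau>}"
    have "\<bar>ub \<eta> * t\<bar> \<le> K"
      using B \<eta> unfolding K_def by (simp add: abs_mult mult_right_mono)
    moreover have "0 \<le> ub \<eta> * \<eta>"
      using ub_pos \<eta> by (intro mult_nonneg_nonneg) auto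
    ultimately have "- K \<le> x - ub \<eta> * (t - \<eta>)"
      using \<open>0 \<le> x\<close> abs_ge_self[of "ub \<eta> * t"] by (simp add: algebra_simps)
    moreover have "0 \<le> rhob \<eta> * ub \<eta>"
      using rhob_pos ub_pos \<eta> by (intro mult_nonneg_nonneg) auto
    ultimately show "- K * (rhob \<eta> * ub \<eta>) \<le> (x - ub \<eta> * (t - \<eta>)) * rhob \<eta> * ub \<eta>"
      unfolding mult.assoc[of _ "rhob \<eta>"] by (rule mult_right_mono)
  qed
  moreover have "0 \<le> K"
    using B unfolding K_def by (meson abs_ge_zero mult_nonneg_nonneg order_trans order_refl)
  ultimately show ?thesis
    by blast
qed

lemma Gmin_eq_0_if_flat:
  assumes "0 \<le> x" "x < x'" and flat: "Gmin ub rhob x t = Gmin ub rhob x' t"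
  shows "Gmin ub rhob x t = 0"
proof -
  obtain K where "0 \<le> K"
    and K: "\<forall>\<tau>. - K * (LINT \<eta>:{0..\<tau>}|lborel. rhob \<eta> * ub \<eta>) \<le> Gtxt ub rhob \<tau> x' t"
    using Gtxt_lower_bound assms(1,2) by (meson order_trans less_imp_le)
  have "0 \<le> Gmin ub rhob x t"
  proof (rule nonneg_if_INF_le_shift[where A="{0..}" and H="\<lambda>\<tau>. Gtxt ub rhob \<tau> x' t"])
    show "0 < x' - x"
      using \<open>x < x'\<close> by simp
    show "Gmin ub rhob x t + (x' - x) * (LINT \<eta>:{0..\<tau>}|lborel. rhob \<eta> * ub \<eta>) \<le> Gtxt ub rhob \<tau> x' t"
      if "\<tau> \<in> {0..}" for \<tau>
      using Gmin_le_Gtxt[OF \<open>0 \<le> x\<close>, of \<tau>] that by (simp add: Gtxt_shift_x[of \<tau> x' t x])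
    show "(INF \<tau>\<in>{0..}. Gtxt ub rhob \<tau> x' t) \<le> Gmin ub rhob x t"
      using flat by (simp add: Gmin_def)
  qed (use \<open>0 \<le> K\<close> K in auto)
  then show ?thesis
    using Gmin_le_0[OF \<open>0 \<le> x\<close>] by (rule antisym[rotated])
qed

lemma Gtxt_scale: "0 \<le> s \<Longrightarrow> s \<le> 1 \<Longrightarrow> s * Gtxt ub rhob \<tau> x t \<le> Gtxt ub rhob \<tau> (s * x) (s * t)"
  unfolding Gtxt_def set_integral_mult_right[symmetric]
proof (rule set_integral_mono[OF set_integrable_mult_right[OF set_integrable_Gtxt_integrand]
      set_integrable_Gtxt_integrand])
  fix \<eta> assume "0 \<le> s" "s \<le> 1" "\<eta> \<in> {0..\<tau>}"
  then have "0 \<le> (1 - s) * \<eta> * (ub \<eta> * rhob \<eta> * ub \<eta>)"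
    using ub_pos rhob_pos by (intro mult_nonneg_nonneg) auto
  then show "s * ((x - ub \<eta> * (t - \<eta>)) * rhob \<eta> * ub \<eta>)
      \<le> (s * x - ub \<eta> * (s * t - \<eta>)) * rhob \<eta> * ub \<eta>"
    by (simp add: algebra_simps)
qed

end

locale initial_boundary_data = initial_data u0 rho0 + boundary_data ub rhob
  for u0 rho0 ub rhob :: "real \<Rightarrow> real"
begin

lemma Iset_flat:
  assumes "x \<le> x'" "x \<in> Iset u0 rho0 ub rhob t" "x' \<in> Iset u0 rho0 ub rhob t"
  shows "Fmin u0 rho0 x t = Fmin u0 rho0 x' t" "Gmin ub rhob x t = Gmin ub rhob x' t"
proof -
  have "0 \<le> x" "Fmin u0 rho0 x t = Gmin ub rhob x t" "Fmin u0 rho0 x' t = Gmin ub rhob x' t"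
    using assms(2,3) by (auto simp: Iset_def)
  moreover have "Fmin u0 rho0 x' t \<le> Fmin u0 rho0 x t"
    using Fmin_antimono[OF \<open>x \<le> x'\<close>] .
  moreover have "Gmin ub rhob x t \<le> Gmin ub rhob x' t"
    using Gmin_mono[OF \<open>0 \<le> x\<close> \<open>x \<le> x'\<close>] .
  ultimately show "Fmin u0 rho0 x t = Fmin u0 rho0 x' t" "Gmin ub rhob x t = Gmin ub rhob x' t"
    by linarith+
qed

lemma Iset_scaled_interval:
  assumes "0 \<le> s" "s \<le> 1" "x < x'"
    and x: "x \<in> Iset u0 rho0 ub rhob t" and x': "x' \<in> Iset u0 rho0 ub rhob t"
  shows "{s * x..s * x'} \<subseteq> Iset u0 rho0 ub rhob (s * t)"
proof
  have "0 \<le> x"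
    using x by (simp add: Iset_def)
  have "Fmin u0 rho0 x' t = 0"
    using Fmin_eq_0_if_flat[OF assms(3) Iset_flat(1)[OF less_imp_le[OF assms(3)] x x']] .
  then have F_nonneg: "0 \<le> Fyxt u0 rho0 y x' t" if "0 \<le> y" for y
    using that Fmin_eq_0_iff by blast
  have "Gmin ub rhob x t = 0"
    using Gmin_eq_0_if_flat[OF \<open>0 \<le> x\<close> assms(3) Iset_flat(2)[OF less_imp_le[OF assms(3)] x x']] .
  then have G_nonneg: "0 \<le> Gtxt ub rhob \<tau> x t" if "0 \<le> \<tau>" for \<tau>
    using that Gmin_eq_0_iff[OF \<open>0 \<le> x\<close>] by blast
  fix z assume z: "z \<in> {s * x..s * x'}"
  have "0 \<le> z"
    using z \<open>0 \<le> s\<close> \<open>0 \<le> x\<close> by (meson atLeastAtMost_iff mult_nonneg_nonneg order_trans)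
  have "0 \<le> Fyxt u0 rho0 y z (s * t)" if "0 \<le> y" for y
  proof -
    have "0 \<le> s * Fyxt u0 rho0 y x' t"
      using F_nonneg[OF that] \<open>0 \<le> s\<close> by simp
    also have "\<dots> \<le> Fyxt u0 rho0 y (s * x') (s * t)"
      using Fyxt_scale assms(1,2) .
    also have "\<dots> \<le> Fyxt u0 rho0 y z (s * t)"
      using z by (simp add: Fyxt_antimono)
    finally show ?thesis .
  qed
  moreover have "0 \<le> Gtxt ub rhob \<tau> z (s * t)" if "0 \<le> \<tau>" for \<tau>
  proof -
    have "0 \<le> s * Gtxt ub rhob \<tau> x t"
      using G_nonneg[OF that] \<open>0 \<le> s\<close> by simp
    also have "\<dots> \<le> Gtxt ub rhob \<tau> (s * x) (s * t)"
      using Gtxt_scale assms(1,2) .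
    also have "\<dots> \<le> Gtxt ub rhob \<tau> z (s * t)"
      using z by (simp add: Gtxt_mono)
    finally show ?thesis .
  qed
  ultimately have "Fmin u0 rho0 z (s * t) = 0" "Gmin ub rhob z (s * t) = 0"
    using Fmin_eq_0_iff Gmin_eq_0_iff[OF \<open>0 \<le> z\<close>] by blast+
  with \<open>0 \<le> z\<close> show "z \<in> Iset u0 rho0 ub rhob (s * t)"
    by (simp add: Iset_def)
qed

end

theorem corollary2p8:
  fixes u0 ub rho0 rhob :: "real \<Rightarrow> real" and t' :: real
  assumes u0_meas: "set_borel_measurable lborel {0..} u0"
      and u0_bdd: "\<exists>B. \<forall>\<eta>\<ge>0. \<bar>u0 \<eta>\<bar> \<le> B"
      and ub_meas: "set_borel_measurable lborel {0..} ub"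
      and ub_bdd: "\<exists>B. \<forall>\<eta>\<ge>0. \<bar>ub \<eta>\<bar> \<le> B"
      and ub_pos: "\<forall>\<eta>\<ge>0. ub \<eta> > 0"
      and rho0_meas: "set_borel_measurable lborel {0..} rho0"
      and rho0_pos: "\<forall>\<eta>\<ge>0. rho0 \<eta> > 0"
      and rho0_lbdd: "\<forall>T. \<exists>B. \<forall>\<eta>\<in>{0..T}. \<bar>rho0 \<eta>\<bar> \<le> B"
      and rhob_meas: "set_borel_measurable lborel {0..} rhob"
      and rhob_pos: "\<forall>\<eta>\<ge>0. rhob \<eta> > 0"
      and rhob_lbdd: "\<forall>T. \<exists>B. \<forall>\<eta>\<in>{0..T}. \<bar>rhob \<eta>\<bar> \<le> B"
      and t'_pos: "t' > 0"
      and single: "\<exists>p. Iset u0 rho0 ub rhob t' = {p}"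
  shows "\<forall>t>t'. Iset u0 rho0 ub rhob t \<noteq> {} \<longrightarrow> (\<exists>p. Iset u0 rho0 ub rhob t = {p})"
proof (intro allI impI)
  interpret initial_boundary_data u0 rho0 ub rhob
    by unfold_locales (fact assms)+
  fix t assume "t' < t" and "Iset u0 rho0 ub rhob t \<noteq> {}"
  have "\<not> x < x'" if "x \<in> Iset u0 rho0 ub rhob t" "x' \<in> Iset u0 rho0 ub rhob t" for x x'
  proof
    assume "x < x'"
    define s where "s = t' / t"
    have "0 < s" "s \<le> 1" "s * t = t'"
      using t'_pos \<open>t' < t\<close> by (auto simp: s_def)
    then have "s * x < s * x'"
      using \<open>x < x'\<close> by simp
    have "{s * x..s * x'} \<subseteq> Iset u0 rho0 ub rhob t'"
      using Iset_scaled_interval[OF less_imp_le[OF \<open>0 < s\<close>] \<open>s \<le> 1\<close> \<open>x < x'\<close> that] \<open>s * t = t'\<close>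
      by simp
    with \<open>s * x < s * x'\<close> single show False
      by (metis atLeastAtMost_iff less_imp_le order_refl singletonD subsetD less_irrefl)
  qed
  with \<open>Iset u0 rho0 ub rhob t \<noteq> {}\<close> show "\<exists>p. Iset u0 rho0 ub rhob t = {p}"
    by (metis all_not_in_conv insertI1 linorder_neqE subsetI subset_singleton_iff)
qed

end
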